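(* For every integer $N\ge 1$, the total area of all ternary paths of length $3N$ equals $$\sum_{k=0}^{N-1}3^{k+1}\binom{3N-k}{N-1-k}.$$
   Context: A ternary path of length $3N$ is a lattice path $(0,c_0),(1,c_1),\dots,(3N,c_{3N})$ with $c_0=c_{3N}=0$, steps $(1,1)$ or $(1,-2)$, and all $c_j\ge 0$. Its area is $c_0+c_1+\cdots+c_{3N}$. The total area is the sum of the areas over all such paths of length $3N$. *)

theory Defs
  imports Main
begin

(* A path of length m is encoded by its list of step increments; each step is
   (1,1) (increment 1) or (1,-2) (increment -2). Heights: c_j = sum of first j steps. *)

definition height :: "int list \<Rightarrow> nat \<Rightarrow> int" where
  "height s j = sum_list (take j s)"

definition ternary_paths :: "nat \<Rightarrow> int list set" where
  "ternary_paths N = {s. length s = 3 * N \<and> set s \<subseteq> {1, -2}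
      \<and> (\<forall>j\<le>3 * N. height s j \<ge> 0) \<and> height s (3 * N) = 0}"

definition path_area :: "int list \<Rightarrow> int" where
  "path_area s = (\<Sum>j\<le>length s. height s j)"

definition total_area :: "nat \<Rightarrow> int" where
  "total_area N = (\<Sum>s\<in>ternary_paths N. path_area s)"

end

theory Submission
  imports Defs
begin

(* Classify nonnegative prefixes by their length n and final height h.  Since every step is
   +1 or -2, n = 3d + h where d is the number of down steps.  Removing the last step gives
   recurrences for the number of such prefixes and for the sum of their areas, the latter picking up
   h times the number of prefixes.  Explicit closed forms in d and h satisfy the same recurrences, and
   at h = 0 the area formula is a 2-weighted binomial sum that Pascal's rule turns into the 3-weighted
   sum of the statement. *)

definition nonneg_paths :: "nat \<Rightarrow> int \<Rightarrow> int list set" where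
  "nonneg_paths n h = {s. length s = n \<and> set s \<subseteq> {1, -2}
      \<and> (\<forall>j\<le>n. height s j \<ge> 0) \<and> height s n = h}"

definition paths_area :: "nat \<Rightarrow> int \<Rightarrow> int" where
  "paths_area n h = (\<Sum>s\<in>nonneg_paths n h. path_area s)"

lemma height_append_le: "j \<le> length s \<Longrightarrow> height (s @ t) j = height s j"
  by (simp add: height_def)

lemma height_snoc_last: "height (s @ [x]) (Suc (length s)) = height s (length s) + x"
  by (simp add: height_def)

lemma path_area_snoc: "path_area (s @ [x]) = path_area s + height s (length s) + x"
proof -
  have "path_area (s @ [x]) = (\<Sum>j\<le>length s. height (s @ [x]) j) + height (s @ [x]) (Suc (length s))"
    by (simp add: path_area_def)
  also have "(\<Sum>j\<le>length s. height (s @ [x]) j) = path_area s"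
    unfolding path_area_def by (rule sum.cong) (simp_all add: height_append_le)
  finally show ?thesis by (simp add: height_snoc_last)
qed

lemma finite_nonneg_paths: "finite (nonneg_paths n h)"
proof (rule finite_subset)
  show "nonneg_paths n h \<subseteq> {s. set s \<subseteq> {1, -2} \<and> length s = n}"
    by (auto simp: nonneg_paths_def)
qed (simp add: finite_lists_length_eq)

lemma nonneg_paths_0: "nonneg_paths 0 h = (if h = 0 then {[]} else {})"
  by (auto simp: nonneg_paths_def height_def)

lemma nonneg_paths_neg: "h < 0 \<Longrightarrow> nonneg_paths n h = {}"
  by (auto simp: nonneg_paths_def)

lemma sum_list_le_length: "set s \<subseteq> {1, -2} \<Longrightarrow> sum_list s \<le> int (length s)"
  by (induction s) auto

lemma nonneg_paths_too_high:
  assumes "int n < h"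
  shows "nonneg_paths n h = {}"
proof -
  have "h \<le> int n" if "s \<in> nonneg_paths n h" for s
    using that sum_list_le_length[of s] by (clarsimp simp: nonneg_paths_def height_def)
  with assms show ?thesis by force
qed

lemma snoc_mem_nonneg_paths:
  assumes t: "t \<in> nonneg_paths n (h - x)" and x: "x \<in> {1, -2}" and "h \<ge> 0"
  shows "t @ [x] \<in> nonneg_paths (Suc n) h"
proof -
  have len: "length t = n" and ends: "height t n = h - x" and nn: "\<forall>j\<le>n. height t j \<ge> 0"
    using t by (auto simp: nonneg_paths_def)
  have final: "height (t @ [x]) (Suc n) = h"
    using height_snoc_last[of t x] len ends by simp
  have "height (t @ [x]) j \<ge> 0" if "j \<le> Suc n" for j
  proof (cases "j = Suc n")
    case True then show ?thesis using final \<open>h \<ge> 0\<close> by simp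
  next
    case False then show ?thesis using that nn len height_append_le[of j t "[x]"] by simp
  qed
  then show ?thesis
    using t x len final by (simp add: nonneg_paths_def)
qed

lemma nonneg_paths_SucE:
  assumes s: "s \<in> nonneg_paths (Suc n) h"
  obtains t x where "s = t @ [x]" "x \<in> {1, -2}" "t \<in> nonneg_paths n (h - x)"
proof -
  have "length s = Suc n" using s by (simp add: nonneg_paths_def)
  then obtain t x where sx: "s = t @ [x]" and len: "length t = n"
    by (cases s rule: rev_cases) auto
  have "x \<in> {1, -2}" "set t \<subseteq> {1, -2}"
    using s sx by (simp_all add: nonneg_paths_def)
  moreover have "height t n = h - x"
    using s sx len height_snoc_last[of t x] by (simp add: nonneg_paths_def)
  moreover have "height t j \<ge> 0" if "j \<le> n" for j
  proof -
    have "height (t @ [x]) j \<ge> 0" using s sx that by (simp add: nonneg_paths_def)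
    then show ?thesis using that len height_append_le[of j t "[x]"] by simp
  qed
  ultimately show ?thesis
    using that sx len by (simp add: nonneg_paths_def)
qed

lemma nonneg_paths_Suc:
  assumes "h \<ge> 0"
  shows "nonneg_paths (Suc n) h =
    (\<lambda>t. t @ [1]) ` nonneg_paths n (h - 1) \<union> (\<lambda>t. t @ [-2]) ` nonneg_paths n (h + 2)"
proof (intro equalityI subsetI)
  fix s assume "s \<in> nonneg_paths (Suc n) h"
  then show "s \<in> (\<lambda>t. t @ [1]) ` nonneg_paths n (h - 1) \<union> (\<lambda>t. t @ [-2]) ` nonneg_paths n (h + 2)"
    by (elim nonneg_paths_SucE) auto
next
  fix s assume "s \<in> (\<lambda>t. t @ [1]) ` nonneg_paths n (h - 1) \<union> (\<lambda>t. t @ [-2]) ` nonneg_paths n (h + 2)"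
  then show "s \<in> nonneg_paths (Suc n) h"
    using snoc_mem_nonneg_paths[OF _ _ assms, of _ n 1] snoc_mem_nonneg_paths[OF _ _ assms, of _ n "-2"]
    by auto
qed

lemma sum_nonneg_paths_Suc:
  assumes "h \<ge> 0"
  shows "(\<Sum>s\<in>nonneg_paths (Suc n) h. f s) =
    (\<Sum>t\<in>nonneg_paths n (h - 1). f (t @ [1])) + (\<Sum>t\<in>nonneg_paths n (h + 2). f (t @ [-2]))"
  unfolding nonneg_paths_Suc[OF assms]
  by (subst sum.union_disjoint) (auto simp: finite_nonneg_paths sum.reindex inj_on_def)

lemma card_nonneg_paths_Suc:
  "h \<ge> 0 \<Longrightarrow> card (nonneg_paths (Suc n) h) = card (nonneg_paths n (h - 1)) + card (nonneg_paths n (h + 2))"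
  using sum_nonneg_paths_Suc[where f = "\<lambda>_. 1::nat"] by simp

lemma paths_area_Suc:
  assumes "h \<ge> 0"
  shows "paths_area (Suc n) h =
    paths_area n (h - 1) + paths_area n (h + 2) + h * int (card (nonneg_paths (Suc n) h))"
proof -
  have "paths_area (Suc n) h =
      (\<Sum>t\<in>nonneg_paths n (h - 1). path_area (t @ [1])) + (\<Sum>t\<in>nonneg_paths n (h + 2). path_area (t @ [-2]))"
    unfolding paths_area_def by (rule sum_nonneg_paths_Suc[OF assms])
  also have "\<dots> = (\<Sum>t\<in>nonneg_paths n (h - 1). path_area t + h) + (\<Sum>t\<in>nonneg_paths n (h + 2). path_area t + h)"
    by (intro arg_cong2[where f = "(+)"] sum.cong) (auto simp: nonneg_paths_def path_area_snoc)
  finally show ?thesis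
    using card_nonneg_paths_Suc[OF assms, of n]
    by (simp add: paths_area_def sum.distrib algebra_simps)
qed

(* binom_sum2 n d = (\<Sum>j<d. 2 ^ (d - 1 - j) * (Suc n choose j)) *)
fun binom_sum2 :: "nat \<Rightarrow> nat \<Rightarrow> int" where
  "binom_sum2 n 0 = 0"
| "binom_sum2 n (Suc d) = int (Suc n choose d) + 2 * binom_sum2 n d"

lemma binom_sum2_Suc_Suc:
  "binom_sum2 (Suc n) (Suc d) = binom_sum2 n (Suc d) + binom_sum2 n d"
  by (induction d) (simp_all add: algebra_simps del: binomial_Suc_Suc add: binomial_Suc_Suc[of "Suc n"])

lemma binom_sum2_eq_binom_sum3:
  "d \<le> Suc n \<Longrightarrow> binom_sum2 n d = (\<Sum>k<d. 3 ^ k * int ((n - k) choose (d - 1 - k)))"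
proof (induction d arbitrary: n)
  case 0 then show ?case by simp
next
  case (Suc d)
  show ?case
  proof (cases d)
    case 0 then show ?thesis by simp
  next
    case (Suc e)
    then obtain m where n: "n = Suc m" and "d \<le> Suc m" using \<open>Suc d \<le> Suc n\<close> by (cases n) auto
    have "binom_sum2 n (Suc d) = int (Suc m choose d) + 3 * binom_sum2 m d"
      unfolding n binom_sum2_Suc_Suc using Suc by simp
    also have "\<dots> = (\<Sum>k<Suc d. 3 ^ k * int ((n - k) choose (d - k)))"
      using Suc.IH[OF \<open>d \<le> Suc m\<close>] unfolding n
      by (simp add: sum.lessThan_Suc_shift sum_distrib_left mult.assoc del: sum.lessThan_Suc)
    finally show ?thesis by simp
  qed
qed

lemma Suc_times_binomial_Suc: "Suc k * (n choose Suc k) = (n - k) * (n choose k)"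
  using binomial_absorption[of k n] binomial_absorb_comp[of n k] by simp

lemma three_times_plus_two_choose_Suc: "(3*e + 2) choose Suc e = 2 * ((3*e + 2) choose e)"
proof -
  have "Suc e * ((3*e + 2) choose Suc e) = Suc e * (2 * ((3*e + 2) choose e))"
    using Suc_times_binomial_Suc[of e "3*e + 2"] by simp
  then show ?thesis by (simp only: mult_cancel1) simp
qed

definition ballot_number :: "nat \<Rightarrow> nat \<Rightarrow> int" where
  "ballot_number d h =
    (if d = 0 then 1 else int ((3*d + h) choose d) - 2 * int ((3*d + h) choose (d - 1)))"

lemma ballot_number_0 [simp]: "ballot_number 0 h = 1"
  by (simp add: ballot_number_def)

lemma ballot_number_Suc_Suc:
  "ballot_number (Suc e) (Suc h) = ballot_number (Suc e) h + ballot_number e (h + 3)"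
proof (cases e)
  case 0
  then show ?thesis by (simp add: ballot_number_def choose_one)
next
  case (Suc f)
  obtain m where m: "3 * Suc e + Suc h = Suc m" "3 * Suc e + h = m" "3 * e + (h + 3) = m"
    by simp
  have "ballot_number (Suc e) (Suc h) = int (Suc m choose Suc e) - 2 * int (Suc m choose e)"
    "ballot_number (Suc e) h = int (m choose Suc e) - 2 * int (m choose e)"
    "ballot_number e (h + 3) = int (m choose e) - 2 * int (m choose f)"
    unfolding ballot_number_def m using Suc by simp_all
  then show ?thesis
    using Suc by (simp del: binomial_Suc_Suc add: binomial_Suc_Suc[of m])
qed

lemma ballot_number_Suc_0: "ballot_number (Suc e) 0 = ballot_number e 2"
proof -
  obtain n where n: "3 * Suc e + 0 = Suc n" "3 * e + 2 = n" by simp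
  have "n choose Suc e = 2 * (n choose e)"
    unfolding n(2)[symmetric] by (rule three_times_plus_two_choose_Suc)
  then have top: "Suc n choose Suc e = 3 * (n choose e)" by simp
  show ?thesis
  proof (cases e)
    case 0
    then show ?thesis using n by (simp add: ballot_number_def)
  next
    case (Suc f)
    have "ballot_number (Suc e) 0 = int (Suc n choose Suc e) - 2 * int (Suc n choose e)"
      "ballot_number e 2 = int (n choose e) - 2 * int (n choose f)"
      unfolding ballot_number_def n using Suc by simp_all
    then show ?thesis
      using Suc top by (simp del: binomial_Suc_Suc add: binomial_Suc_Suc[of n])
  qed
qed

lemma ballot_number_rec:
  assumes "3*d + h \<ge> 1"
  shows "ballot_number d h = (if h \<ge> 1 then ballot_number d (h - 1) else 0)
    + (if d \<ge> 1 then ballot_number (d - 1) (h + 2) else 0)"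
proof (cases d)
  case 0
  with assms show ?thesis by simp
next
  case (Suc e)
  then show ?thesis
    by (cases h) (simp_all add: ballot_number_Suc_0 ballot_number_Suc_Suc numeral_2_eq_2 numeral_3_eq_3)
qed

definition ballot_area :: "nat \<Rightarrow> nat \<Rightarrow> int" where
  "ballot_area d h = 3 * int (h + 1) * binom_sum2 (3*d + h) d
    + int ((h + 1) choose 2) * int ((3*d + h + 1) choose d)"

lemma Suc_choose_two: "int (Suc h choose 2) = int (h choose 2) + int h"
  using binomial_Suc_Suc[of h 1] by (simp add: numeral_2_eq_2)

lemma ballot_area_Suc:
  "ballot_area (Suc e) h = int h * ballot_number (Suc e) h
    + (if h \<ge> 1 then ballot_area (Suc e) (h - 1) else 0) + ballot_area e (h + 2)"
proof -
  obtain n where n: "3 * Suc e + h = Suc n" "3 * e + (h + 2) = n" by simp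
  have prev: "(if h \<ge> 1 then ballot_area (Suc e) (h - 1) else 0)
      = 3 * int h * binom_sum2 n (Suc e) + int (h choose 2) * int (Suc n choose Suc e)"
  proof (cases h)
    case (Suc g)
    then have "3 * Suc e + g = n" using n by simp
    then show ?thesis using Suc by (simp add: ballot_area_def)
  qed simp
  have cur: "ballot_area (Suc e) h = 3 * int (h + 1) * binom_sum2 (Suc n) (Suc e)
      + int ((h + 1) choose 2) * int (Suc (Suc n) choose Suc e)"
    unfolding ballot_area_def n by simp
  have after: "ballot_area e (h + 2) = 3 * int (h + 3) * binom_sum2 n e
      + int ((h + 3) choose 2) * int (Suc n choose e)"
    unfolding ballot_area_def n by (simp add: numeral_3_eq_3)
  have num: "ballot_number (Suc e) h = int (Suc n choose Suc e) - 2 * int (Suc n choose e)"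
    unfolding ballot_number_def n by simp
  have "int ((h + 3) choose 2) = int (h choose 2) + 3 * int h + 3"
    using Suc_choose_two[of h] Suc_choose_two[of "h + 1"] Suc_choose_two[of "h + 2"]
    by (simp add: numeral_3_eq_3)
  then show ?thesis
    unfolding prev cur after num binom_sum2_Suc_Suc
    using Suc_choose_two[of h]
    by (simp del: binomial_Suc_Suc add: binomial_Suc_Suc[of "Suc n"] algebra_simps)
qed

lemma ballot_area_rec:
  assumes "3*d + h \<ge> 1"
  shows "ballot_area d h = int h * ballot_number d h
    + (if h \<ge> 1 then ballot_area d (h - 1) else 0)
    + (if d \<ge> 1 then ballot_area (d - 1) (h + 2) else 0)"
proof (cases d)
  case 0
  then obtain g where "h = Suc g" using assms by (cases h) auto
  then show ?thesis
    using 0 Suc_choose_two[of "Suc g"] by (simp add: ballot_area_def)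
next
  case (Suc e)
  then show ?thesis using ballot_area_Suc[of e h] by simp
qed

lemma card_nonneg_paths:
  "n = 3*d + h \<Longrightarrow> int (card (nonneg_paths n (int h))) = ballot_number d h"
proof (induction n arbitrary: d h)
  case 0
  then show ?case by (simp add: nonneg_paths_0)
next
  case (Suc n)
  have down: "int (card (nonneg_paths n (int h - 1))) = (if h \<ge> 1 then ballot_number d (h - 1) else 0)"
  proof (cases "h \<ge> 1")
    case True
    then have "n = 3*d + (h - 1)" and "int h - 1 = int (h - 1)" using Suc.prems by simp_all
    then show ?thesis using Suc.IH[OF \<open>n = 3*d + (h - 1)\<close>] True by simp
  qed (simp add: nonneg_paths_neg)
  have up: "int (card (nonneg_paths n (int h + 2))) = (if d \<ge> 1 then ballot_number (d - 1) (h + 2) else 0)"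
  proof (cases "d \<ge> 1")
    case True
    then have "n = 3*(d - 1) + (h + 2)" using Suc.prems by simp
    then have "int (card (nonneg_paths n (int (h + 2)))) = ballot_number (d - 1) (h + 2)"
      by (rule Suc.IH)
    then show ?thesis using True by (simp add: add.commute)
  qed (use Suc.prems in \<open>simp add: nonneg_paths_too_high\<close>)
  show ?case
    using card_nonneg_paths_Suc[of "int h" n] down up ballot_number_rec[of d h] Suc.prems by simp
qed

lemma paths_area_eq_ballot_area:
  "n = 3*d + h \<Longrightarrow> paths_area n (int h) = ballot_area d h"
proof (induction n arbitrary: d h)
  case 0
  then show ?case by (simp add: paths_area_def nonneg_paths_0 ballot_area_def path_area_def height_def)
next
  case (Suc n)
  have down: "paths_area n (int h - 1) = (if h \<ge> 1 then ballot_area d (h - 1) else 0)"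
  proof (cases "h \<ge> 1")
    case True
    then have "n = 3*d + (h - 1)" and "int h - 1 = int (h - 1)" using Suc.prems by simp_all
    then show ?thesis using Suc.IH[OF \<open>n = 3*d + (h - 1)\<close>] True by simp
  qed (simp add: paths_area_def nonneg_paths_neg)
  have up: "paths_area n (int h + 2) = (if d \<ge> 1 then ballot_area (d - 1) (h + 2) else 0)"
  proof (cases "d \<ge> 1")
    case True
    then have "n = 3*(d - 1) + (h + 2)" using Suc.prems by simp
    then have "paths_area n (int (h + 2)) = ballot_area (d - 1) (h + 2)"
      by (rule Suc.IH)
    then show ?thesis using True by (simp add: add.commute)
  qed (use Suc.prems in \<open>simp add: paths_area_def nonneg_paths_too_high\<close>)
  show ?case
    using paths_area_Suc[of "int h" n] down up ballot_area_rec[of d h] card_nonneg_paths[OF Suc.prems]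
      Suc.prems by simp
qed

theorem mainTheorem3:
  fixes N :: nat
  assumes "N \<ge> 1"
  shows "total_area N = (\<Sum>k=0..N-1. 3 ^ (k+1) * int ((3*N - k) choose (N - 1 - k)))"
proof -
  have "total_area N = paths_area (3*N) 0"
    by (simp add: total_area_def paths_area_def ternary_paths_def nonneg_paths_def)
  also have "\<dots> = ballot_area N 0"
    using paths_area_eq_ballot_area[of "3*N" N 0] by simp
  also have "\<dots> = 3 * binom_sum2 (3*N) N"
    by (simp add: ballot_area_def)
  also have "\<dots> = 3 * (\<Sum>k<N. 3 ^ k * int ((3*N - k) choose (N - 1 - k)))"
    using binom_sum2_eq_binom_sum3[of N "3*N"] by simp
  also have "\<dots> = (\<Sum>k=0..N-1. 3 ^ (k+1) * int ((3*N - k) choose (N - 1 - k)))"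
    using assms by (simp add: sum_distrib_left mult.assoc atLeast0AtMost lessThan_Suc_atMost[symmetric])
  finally show ?thesis .
qed

end
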